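(* Let $m,n\ge1$, $0\le r\le m$, $A=(A_0,\dots,A_n)\in\mathbb{S}_m(\mathbb{Q})^{n+1}$ and $c\in\mathbb{Q}^n$. Suppose that $\mathcal{F}_r(A,c)\neq\emptyset$, and let $p\in\mathcal{R}_r(A,c)$. Then every $x^*\in\mathcal{F}_r(A,c)$ with $\operatorname{rank}A(x^* )=p$ is a local minimizer of $\ell_c(x)=c^Tx$ on $\mathcal{D}_p\cap\mathbb{R}^n$.
   Context: $\mathbb{S}_m(\mathbb{Q})$ denotes the symmetric $m\times m$ rational matrices; $A(x)=A_0+x_1A_1+\cdots+x_nA_n$. The spectrahedron is $\mathscr{S}=\{x\in\mathbb{R}^n: A(x)\succeq0\}$ (positive semidefinite), and $\mathcal{D}_p=\{x\in\mathbb{C}^n:\operatorname{rank}A(x)\le p\}$. $\mathcal{F}_r(A,c)$ is the set of minimizers of $\ell_c$ on $\mathscr{S}\cap\mathcal{D}_r$ (i.e. points $x^*$ of this set with $\ell_c(x^* )\le\ell_c(x)$ for all $x$ in it), and $\mathcal{R}_r(A,c)=\{p: 0\le p\le r,\ \exists x\in\mathcal{F}_r(A,c),\ \operatorname{rank}A(x)=p\}$. A point $x^*\in S\subset\mathbb{R}^n$ is a local minimizer of $\ell_c$ on $S$ if there is a Euclidean open set $U\ni x^*$ with $\ell_c(x^* )\le\ell_c(x)$ for all $x\in U\cap S$. *)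

theory Defs
  imports "HOL-Analysis.Analysis"
begin

definition pencil :: "'a::comm_ring_1^'m^'m \<Rightarrow> ('n::finite \<Rightarrow> 'a^'m^'m) \<Rightarrow> 'a^'n \<Rightarrow> 'a^'m^'m" where
  "pencil A0 A x = (\<chi> i j. A0$i$j + (\<Sum>k\<in>UNIV. x$k * (A k)$i$j))"

definition cmat :: "real^'m^'k \<Rightarrow> complex^'m^'k" where
  "cmat M = (\<chi> i j. complex_of_real (M$i$j))"

definition cvec :: "real^'n \<Rightarrow> complex^'n" where
  "cvec x = (\<chi> i. complex_of_real (x$i))"

definition rat_matrix :: "real^'m^'k \<Rightarrow> bool" where
  "rat_matrix M \<longleftrightarrow> (\<forall>i j. M$i$j \<in> \<rat>)"

definition rat_vector :: "real^'n \<Rightarrow> bool" where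
  "rat_vector v \<longleftrightarrow> (\<forall>i. v$i \<in> \<rat>)"

definition symmetric_matrix :: "'a^'m^'m \<Rightarrow> bool" where
  "symmetric_matrix M \<longleftrightarrow> transpose M = M"

definition psd :: "real^'m^'m \<Rightarrow> bool" where
  "psd M \<longleftrightarrow> (\<forall>v. 0 \<le> v \<bullet> (M *v v))"

definition spectrahedron :: "real^'m^'m \<Rightarrow> ('n::finite \<Rightarrow> real^'m^'m) \<Rightarrow> (real^'n) set" where
  "spectrahedron A0 A = {x. psd (pencil A0 A x)}"

definition rank_locus :: "real^'m^'m \<Rightarrow> ('n::finite \<Rightarrow> real^'m^'m) \<Rightarrow> nat \<Rightarrow> (complex^'n) set" where
  "rank_locus A0 A p = {z. rank (pencil (cmat A0) (\<lambda>k. cmat (A k)) z) \<le> p}"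

definition real_rank_locus :: "real^'m^'m \<Rightarrow> ('n::finite \<Rightarrow> real^'m^'m) \<Rightarrow> nat \<Rightarrow> (real^'n) set" where
  "real_rank_locus A0 A p = {x. cvec x \<in> rank_locus A0 A p}"

definition Fmin :: "real^'m^'m \<Rightarrow> ('n::finite \<Rightarrow> real^'m^'m) \<Rightarrow> real^'n \<Rightarrow> nat \<Rightarrow> (real^'n) set" where
  "Fmin A0 A c r = {x. x \<in> spectrahedron A0 A \<inter> real_rank_locus A0 A r \<and>
      (\<forall>y \<in> spectrahedron A0 A \<inter> real_rank_locus A0 A r. c \<bullet> x \<le> c \<bullet> y)}"

definition Rranks :: "real^'m^'m \<Rightarrow> ('n::finite \<Rightarrow> real^'m^'m) \<Rightarrow> real^'n \<Rightarrow> nat \<Rightarrow> nat set" where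
  "Rranks A0 A c r = {p. p \<le> r \<and> (\<exists>x \<in> Fmin A0 A c r. rank (pencil A0 A x) = p)}"

definition local_minimizer :: "real^'n \<Rightarrow> (real^'n) set \<Rightarrow> real^'n \<Rightarrow> bool" where
  "local_minimizer c S x \<longleftrightarrow> x \<in> S \<and>
     (\<exists>U. open U \<and> x \<in> U \<and> (\<forall>y \<in> U \<inter> S. c \<bullet> x \<le> c \<bullet> y))"

end

theory Submission
  imports Defs
begin

text \<open>
  Let \<open>M = A(x\<^sup>*)\<close> have rank \<open>p\<close> and \<open>V\<close> be its range. Since \<open>M\<close> is positive semidefinite, its
  quadratic form is positive definite on the \<open>p\<close>-dimensional space \<open>V\<close>, hence bounded below by
  \<open>\<lambda>|v|\<^sup>2\<close> there, and this persists for \<open>A(y)\<close> with \<open>y\<close> near \<open>x\<^sup>*\<close>. A symmetric matrix of rank at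
  most \<open>p\<close> that is positive definite on a \<open>p\<close>-dimensional subspace is injective on it, so its range
  is the image of that subspace and it is positive semidefinite. Thus near \<open>x\<^sup>*\<close> every real point
  of \<open>\<D>\<^sub>p\<close> lies in \<open>\<S> \<inter> \<D>\<^sub>r\<close>, where \<open>\<ell>\<^sub>c\<close> is at least \<open>\<ell>\<^sub>c(x\<^sup>*)\<close>. Complex and real ranks of a real matrix
  agree, which identifies real points of \<open>\<D>\<^sub>p\<close> with real rank conditions.
\<close>

lemma cvec_add [simp]: "cvec (x + y) = cvec x + cvec y"
  by (simp add: cvec_def vec_eq_iff)

lemma cvec_scaleR [simp]: "cvec (a *\<^sub>R x) = complex_of_real a *s cvec x"
  by (simp add: cvec_def vec_eq_iff)

lemma cvec_0 [simp]: "cvec 0 = 0"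
  by (simp add: cvec_def vec_eq_iff)

lemma inj_cvec: "inj cvec"
  by (auto simp: inj_on_def cvec_def vec_eq_iff)

lemma rows_cmat: "rows (cmat M) = cvec ` rows M"
proof -
  have "row i (cmat M) = cvec (row i M)" for i
    by (simp add: row_def cmat_def cvec_def vec_eq_iff)
  then show ?thesis by (auto simp: rows_def)
qed

lemma cvec_in_span: "x \<in> span B \<Longrightarrow> cvec x \<in> vec.span (cvec ` B)"
proof (induction rule: span_induct)
  case base
  show ?case unfolding subspace_def
    by (auto simp: vec.span_zero vec.span_add vec.span_scale)
next
  case (step x)
  then show ?case by (simp add: vec.span_base)
qed

lemma vec_independent_cvec_image:
  assumes "independent B"
  shows "vec.independent (cvec ` B)"
proof
  assume "vec.dependent (cvec ` B)"
  then obtain t u where t: "finite t" "t \<subseteq> cvec ` B" "(\<Sum>v\<in>t. u v *s v) = 0" "\<exists>v\<in>t. u v \<noteq> 0"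
    unfolding vec.dependent_explicit by blast
  obtain t' where t': "t' \<subseteq> B" "t = cvec ` t'" using t(2) by (meson subset_imageE)
  have inj: "inj_on cvec t'" using inj_cvec inj_on_subset by blast
  have fin: "finite t'" using t(1) t' inj finite_imageD by blast
  have "(\<Sum>b\<in>t'. u (cvec b) *s cvec b) = 0"
    using t(3) t' by (simp add: sum.reindex[OF inj])
  then have "(\<Sum>b\<in>t'. u (cvec b) * complex_of_real (b $ i)) = 0" for i
    by (simp add: vec_eq_iff sum_component cvec_def)
  from arg_cong[OF this, of Re] arg_cong[OF this, of Im]
  have re: "(\<Sum>b\<in>t'. Re (u (cvec b)) *\<^sub>R b) = 0" and im: "(\<Sum>b\<in>t'. Im (u (cvec b)) *\<^sub>R b) = 0"
    by (simp_all add: Re_sum Im_sum vec_eq_iff sum_component)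
  have "\<forall>b\<in>t'. Re (u (cvec b)) = 0 \<and> Im (u (cvec b)) = 0"
    using assms[unfolded independent_explicit_module, rule_format, OF fin t'(1) re]
      assms[unfolded independent_explicit_module, rule_format, OF fin t'(1) im] by blast
  then show False using t(4) t' by (auto simp: complex_eq_iff)
qed

lemma rank_cmat: "rank (cmat M) = rank M"
proof -
  obtain B where B: "B \<subseteq> rows M" "independent B" "rows M \<subseteq> span B" "card B = dim (rows M)"
    using basis_exists by blast
  have fin: "finite B" using B(2) independent_imp_finite by blast
  have card: "card (cvec ` B) = card B"
    using inj_cvec by (meson card_image inj_on_subset subset_UNIV)
  have "rows (cmat M) \<subseteq> vec.span (cvec ` B)"
    using B(3) by (auto simp: rows_cmat intro: cvec_in_span)
  then have "vec.dim (rows (cmat M)) \<le> card (cvec ` B)"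
    using fin by (intro vec.dim_le_card) auto
  moreover have "card (cvec ` B) \<le> vec.dim (rows (cmat M))"
    using B vec_independent_cvec_image by (intro vec.independent_card_le_dim) (auto simp: rows_cmat)
  ultimately show ?thesis
    using B(4) card by (simp add: row_rank_def_gen dim_vec_eq)
qed

lemma pencil_cmat: "pencil (cmat A0) (\<lambda>k. cmat (A k)) (cvec y) = cmat (pencil A0 A y)"
  by (simp add: pencil_def cmat_def cvec_def vec_eq_iff)

lemma real_rank_locus_iff: "y \<in> real_rank_locus A0 A p \<longleftrightarrow> rank (pencil A0 A y) \<le> p"
  by (simp add: real_rank_locus_def rank_locus_def pencil_cmat rank_cmat)

lemma symmetric_matrix_pencil:
  assumes "symmetric_matrix A0" "\<forall>k. symmetric_matrix (A k)"
  shows "symmetric_matrix (pencil A0 A x)"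
proof -
  have A0: "A0 $ j $ i = A0 $ i $ j" and Ak: "A k $ j $ i = A k $ i $ j" for i j k
    using assms unfolding symmetric_matrix_def transpose_def by (metis vec_lambda_beta)+
  have "(\<Sum>k\<in>UNIV. x $ k * A k $ j $ i) = (\<Sum>k\<in>UNIV. x $ k * A k $ i $ j)" for i j
    by (simp only: Ak)
  then show ?thesis
    unfolding symmetric_matrix_def transpose_def pencil_def vec_eq_iff
    by (simp only: vec_lambda_beta A0) simp
qed

lemma pencil_mult_vec: "pencil A0 A x *v v = A0 *v v + (\<Sum>k\<in>UNIV. x$k *\<^sub>R (A k *v v))"
proof -
  have "(\<Sum>j\<in>UNIV. (A0$i$j + (\<Sum>k\<in>UNIV. x$k * A k$i$j)) * v$j)
     = (\<Sum>j\<in>UNIV. A0$i$j * v$j) + (\<Sum>k\<in>UNIV. x$k * (\<Sum>j\<in>UNIV. A k$i$j * v$j))" for i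
  proof -
    have "(\<Sum>j\<in>UNIV. (A0$i$j + (\<Sum>k\<in>UNIV. x$k * A k$i$j)) * v$j)
      = (\<Sum>j\<in>UNIV. A0$i$j * v$j) + (\<Sum>j\<in>UNIV. \<Sum>k\<in>UNIV. x$k * (A k$i$j * v$j))"
      by (simp add: distrib_right sum.distrib sum_distrib_right mult.assoc)
    also have "(\<Sum>j\<in>UNIV. \<Sum>k\<in>UNIV. x$k * (A k$i$j * v$j)) = (\<Sum>k\<in>UNIV. x$k * (\<Sum>j\<in>UNIV. A k$i$j * v$j))"
      by (subst sum.swap) (simp add: sum_distrib_left)
    finally show ?thesis .
  qed
  then show ?thesis by (simp add: pencil_def matrix_vector_mult_def vec_eq_iff sum_component)
qed

lemma pencil_quadratic_form:
  "v \<bullet> (pencil A0 A x *v v) = v \<bullet> (A0 *v v) + (\<Sum>k\<in>UNIV. x$k * (v \<bullet> (A k *v v)))"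
  by (simp add: pencil_mult_vec inner_sum_right inner_add_right)

lemma pencil_quadratic_form_lipschitz:
  fixes A0 :: "real^'m^'m" and A :: "'n::finite \<Rightarrow> real^'m^'m"
  obtains C where "C \<ge> 0"
    "\<And>x y v. \<bar>v \<bullet> (pencil A0 A y *v v) - v \<bullet> (pencil A0 A x *v v)\<bar> \<le> C * norm (y - x) * (v \<bullet> v)"
proof -
  have "\<forall>k. \<exists>K\<ge>0. \<forall>v. norm (A k *v v) \<le> norm v * K"
    using bounded_linear.nonneg_bounded[OF matrix_vector_mul_bounded_linear] by blast
  then obtain K where K: "\<And>k. K k \<ge> 0" "\<And>k v. norm (A k *v v) \<le> norm v * K k"
    by metis
  define C where "C = (\<Sum>k\<in>UNIV. K k)"
  have "\<bar>v \<bullet> (pencil A0 A y *v v) - v \<bullet> (pencil A0 A x *v v)\<bar>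
        \<le> C * norm (y - x) * (v \<bullet> v)" for x y v
  proof -
    have "\<bar>(y - x)$k * (v \<bullet> (A k *v v))\<bar> \<le> norm (y - x) * (K k * (v \<bullet> v))" for k
    proof -
      have "\<bar>v \<bullet> (A k *v v)\<bar> \<le> norm v * (norm v * K k)"
        using Cauchy_Schwarz_ineq2[of v "A k *v v"] K(2)[of k v]
        by (meson mult_left_mono norm_ge_zero order_trans)
      then have "\<bar>v \<bullet> (A k *v v)\<bar> \<le> K k * (v \<bullet> v)"
        by (simp add: power2_norm_eq_inner[symmetric] power2_eq_square mult_ac)
      then show ?thesis
        unfolding abs_mult
        by (intro mult_mono component_le_norm_cart) (auto simp: K(1))
    qed
    then have "\<bar>\<Sum>k\<in>UNIV. (y - x)$k * (v \<bullet> (A k *v v))\<bar>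
        \<le> (\<Sum>k\<in>UNIV. norm (y - x) * (K k * (v \<bullet> v)))"
      by (rule order_trans[OF sum_abs sum_mono])
    then show ?thesis
      by (simp add: pencil_quadratic_form C_def sum_distrib_left sum_distrib_right algebra_simps
          sum.distrib[symmetric] sum_subtractf[symmetric])
  qed
  moreover have "C \<ge> 0" by (simp add: C_def K(1) sum_nonneg)
  ultimately show ?thesis using that by blast
qed

lemma symmetric_matrix_inner_mult:
  fixes M :: "real^'m^'m"
  assumes "symmetric_matrix M"
  shows "a \<bullet> (M *v b) = (M *v a) \<bullet> b"
  using assms dot_lmul_matrix[of a M b] transpose_matrix_vector[of M a]
  by (simp add: symmetric_matrix_def)

lemma psd_quadratic_form_eq_0_imp:
  fixes M :: "real^'m^'m"
  assumes sym: "symmetric_matrix M" and psd: "psd M" and zero: "v \<bullet> (M *v v) = 0"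
  shows "M *v v = 0"
proof (rule ccontr)
  define w where "w = M *v v"
  assume "M *v v \<noteq> 0"
  then have w: "w \<bullet> w > 0" by (simp add: w_def)
  define a where "a = w \<bullet> (M *v w)"
  have a: "a \<ge> 0" using psd by (simp add: psd_def a_def)
  text \<open>Along \<open>v - t w\<close> the form equals \<open>t (t a - 2 |w|\<^sup>2)\<close>, which is negative for small \<open>t > 0\<close>.\<close>
  define t where "t = (w \<bullet> w) / (a + 1)"
  have t: "t > 0" using w a by (simp add: t_def)
  have "v \<bullet> (M *v w) = w \<bullet> w"
    using symmetric_matrix_inner_mult[OF sym, of v w] by (simp add: w_def inner_commute)
  moreover have "0 \<le> (v - t *\<^sub>R w) \<bullet> (M *v (v - t *\<^sub>R w))"
    using psd by (simp add: psd_def)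
  ultimately have "0 \<le> t * (t * a - 2 * (w \<bullet> w))"
    using zero by (simp add: matrix_vector_mult_diff_distrib matrix_vector_mult_scaleR
        inner_diff_left inner_diff_right a_def w_def algebra_simps)
  then have "2 * (w \<bullet> w) \<le> t * a" using t by (simp add: zero_le_mult_iff)
  moreover have "t * a \<le> w \<bullet> w"
    using w a by (simp add: t_def mult_left_le field_simps)
  ultimately show False using w by linarith
qed

lemma psd_positive_on_range:
  fixes M :: "real^'m^'m"
  assumes sym: "symmetric_matrix M" and psd: "psd M"
    and v: "v \<in> range ((*v) M)" "v \<noteq> 0"
  shows "0 < v \<bullet> (M *v v)"
proof -
  obtain u where u: "v = M *v u" using v(1) by blast
  have "M *v v \<noteq> 0"
  proof
    assume "M *v v = 0"
    then have "v \<bullet> v = 0" using symmetric_matrix_inner_mult[OF sym, of u v] u by simp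
    then show False using v(2) by simp
  qed
  then show ?thesis
    using psd_quadratic_form_eq_0_imp[OF sym psd] psd by (force simp: psd_def order_le_less)
qed

lemma quadratic_form_uniformly_positive_on_subspace:
  fixes M :: "real^'m^'m"
  assumes V: "subspace V" and pos: "\<forall>v\<in>V. v \<noteq> 0 \<longrightarrow> 0 < v \<bullet> (M *v v)"
  obtains lam where "lam > 0" "\<forall>v\<in>V. lam * (v \<bullet> v) \<le> v \<bullet> (M *v v)"
proof (cases "V \<inter> sphere 0 1 = {}")
  case True
  have "V \<subseteq> {0}"
  proof
    fix v assume "v \<in> V"
    then have "v \<noteq> 0 \<Longrightarrow> (1 / norm v) *\<^sub>R v \<in> V \<inter> sphere 0 1"
      using V by (simp add: subspace_scale)
    then show "v \<in> {0}" using True by auto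
  qed
  then show ?thesis using that[of 1] by fastforce
next
  case False
  have "compact (V \<inter> sphere 0 1)"
    using compact_Int_closed[OF compact_sphere closed_subspace[OF V], of 0 1] by (simp add: Int_commute)
  moreover have "continuous_on (V \<inter> sphere 0 1) (\<lambda>v. v \<bullet> (M *v v))"
    by (intro continuous_intros linear_continuous_on matrix_vector_mul_bounded_linear)
  ultimately obtain v0 where v0: "v0 \<in> V \<inter> sphere 0 1"
    "\<forall>v\<in>V \<inter> sphere 0 1. v0 \<bullet> (M *v v0) \<le> v \<bullet> (M *v v)"
    using continuous_attains_inf False by blast
  have "v0 \<bullet> (M *v v0) * (v \<bullet> v) \<le> v \<bullet> (M *v v)" if v: "v \<in> V" "v \<noteq> 0" for v
  proof -
    define u where "u = (1 / norm v) *\<^sub>R v"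
    have "u \<in> V \<inter> sphere 0 1" using v V by (simp add: u_def subspace_scale)
    then have "v0 \<bullet> (M *v v0) * (v \<bullet> v) \<le> u \<bullet> (M *v u) * (v \<bullet> v)"
      using v0(2) by (simp add: mult_right_mono)
    also have "u \<bullet> (M *v u) * (v \<bullet> v) = v \<bullet> (M *v v)"
      using v(2) by (simp add: u_def matrix_vector_mult_scaleR power2_norm_eq_inner[symmetric]
          power2_eq_square field_simps)
    finally show ?thesis .
  qed
  moreover have "0 < v0 \<bullet> (M *v v0)" using v0(1) pos by auto
  ultimately show ?thesis using that[of "v0 \<bullet> (M *v v0)"] by force
qed

lemma psd_if_positive_on_subspace_rank_le:
  fixes M :: "real^'m^'m"
  assumes sym: "symmetric_matrix M" and V: "subspace V" and rank: "rank M \<le> dim V"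
    and pos: "\<forall>v\<in>V. v \<noteq> 0 \<longrightarrow> 0 < v \<bullet> (M *v v)"
  shows "psd M"
proof -
  obtain B where B: "B \<subseteq> V" "independent B" "V \<subseteq> span B" "card B = dim V"
    using basis_exists by blast
  have span_B: "span B = V" using B V by (simp add: span_subspace)
  have inj: "inj_on ((*v) M) V"
  proof (rule inj_onI)
    fix x y assume "x \<in> V" "y \<in> V" "M *v x = M *v y"
    then have "x - y \<in> V" "M *v (x - y) = 0"
      using V by (auto simp: matrix_vector_mult_diff_distrib subspace_diff)
    then show "x = y" using pos by force
  qed
  have "independent ((*v) M ` B)"
    using B(1,2) inj span_B linear_independent_injective_image[OF matrix_vector_mul_linear]
    by blast
  moreover have "card ((*v) M ` B) = card B"
    using inj B(1) by (meson card_image inj_on_subset)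
  ultimately have "range ((*v) M) \<subseteq> span ((*v) M ` B)"
    using rank B(4) rank_dim_range[of M] by (intro card_ge_dim_independent) auto
  also have "\<dots> = (*v) M ` V" using span_B by (simp add: span_linear_image)
  finally have range: "range ((*v) M) \<subseteq> (*v) M ` V" .
  show ?thesis unfolding psd_def
  proof
    fix w
    obtain v where v: "v \<in> V" "M *v w = M *v v" using range by blast
    text \<open>\<open>w - v\<close> lies in the kernel, so by symmetry the form at \<open>w\<close> equals the form at \<open>v\<close>.\<close>
    have "(w - v) \<bullet> (M *v v) = 0"
      using symmetric_matrix_inner_mult[OF sym, of "w - v" v] v(2)
      by (simp add: matrix_vector_mult_diff_distrib)
    then have "w \<bullet> (M *v w) = v \<bullet> (M *v v)" using v(2) by (simp add: inner_diff_left)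
    then show "0 \<le> w \<bullet> (M *v w)" using pos v(1) by (cases "v = 0") (auto intro: less_imp_le)
  qed
qed

lemma psd_pencil_near_if_rank_le:
  fixes A0 :: "real^'m^'m" and A :: "'n::finite \<Rightarrow> real^'m^'m"
  assumes sym: "\<And>y. symmetric_matrix (pencil A0 A y)" and psd: "psd (pencil A0 A x)"
  obtains d where "d > 0"
    "\<And>y. dist y x < d \<Longrightarrow> rank (pencil A0 A y) \<le> rank (pencil A0 A x) \<Longrightarrow> psd (pencil A0 A y)"
proof -
  define V where "V = range ((*v) (pencil A0 A x))"
  have V: "subspace V"
    unfolding V_def by (metis span_linear_image[OF matrix_vector_mul_linear] span_UNIV subspace_span)
  have dim_V: "dim V = rank (pencil A0 A x)" by (simp add: V_def rank_dim_range)
  obtain lam where lam: "lam > 0" "\<forall>v\<in>V. lam * (v \<bullet> v) \<le> v \<bullet> (pencil A0 A x *v v)"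
    using quadratic_form_uniformly_positive_on_subspace[OF V] psd_positive_on_range[OF sym psd]
    unfolding V_def by blast
  obtain C where C: "C \<ge> 0"
    "\<And>x y v. \<bar>v \<bullet> (pencil A0 A y *v v) - v \<bullet> (pencil A0 A x *v v)\<bar> \<le> C * norm (y - x) * (v \<bullet> v)"
    using pencil_quadratic_form_lipschitz by blast
  define d where "d = lam / (C + 1)"
  have "psd (pencil A0 A y)"
    if y: "dist y x < d" "rank (pencil A0 A y) \<le> rank (pencil A0 A x)" for y
  proof (rule psd_if_positive_on_subspace_rank_le[OF sym V])
    show "rank (pencil A0 A y) \<le> dim V" using y(2) dim_V by simp
    have "C * norm (y - x) < lam"
    proof -
      have "C * norm (y - x) \<le> (C + 1) * norm (y - x)" by (simp add: distrib_right)
      also have "\<dots> < (C + 1) * d"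
        using y(1) C(1) by (intro mult_strict_left_mono) (auto simp: dist_norm)
      finally show ?thesis using C(1) by (simp add: d_def)
    qed
    show "\<forall>v\<in>V. v \<noteq> 0 \<longrightarrow> 0 < v \<bullet> (pencil A0 A y *v v)"
    proof (intro ballI impI)
      fix v assume v: "v \<in> V" "v \<noteq> 0"
      then have "C * norm (y - x) * (v \<bullet> v) < lam * (v \<bullet> v)"
        using \<open>C * norm (y - x) < lam\<close> by (simp add: mult_strict_right_mono)
      then show "0 < v \<bullet> (pencil A0 A y *v v)"
        using bspec[OF lam(2) v(1)] C(2)[of v y x] by (simp add: abs_le_iff)
    qed
  qed
  moreover have "d > 0" using lam(1) C(1) by (simp add: d_def)
  ultimately show ?thesis using that by blast
qed

theorem theorem1:
  fixes A0 :: "real^'m^'m" and A :: "'n::finite \<Rightarrow> real^'m^'m"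
    and c :: "real^'n" and r p :: nat
  assumes "r \<le> CARD('m)"
    and "symmetric_matrix A0" and "rat_matrix A0"
    and "\<forall>k. symmetric_matrix (A k) \<and> rat_matrix (A k)"
    and "rat_vector c"
    and "Fmin A0 A c r \<noteq> {}"
    and "p \<in> Rranks A0 A c r"
  shows "\<forall>xs \<in> Fmin A0 A c r. rank (pencil A0 A xs) = p \<longrightarrow>
           local_minimizer c (real_rank_locus A0 A p) xs"
proof (intro ballI impI)
  fix xs assume xs: "xs \<in> Fmin A0 A c r" and rank_xs: "rank (pencil A0 A xs) = p"
  have "p \<le> r" using assms(7) by (simp add: Rranks_def)
  have sym: "symmetric_matrix (pencil A0 A y)" for y
    using assms(2,4) by (simp add: symmetric_matrix_pencil)
  have "psd (pencil A0 A xs)" using xs by (simp add: Fmin_def spectrahedron_def)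
  then obtain d where d: "d > 0"
    "\<And>y. dist y xs < d \<Longrightarrow> rank (pencil A0 A y) \<le> p \<Longrightarrow> psd (pencil A0 A y)"
    using psd_pencil_near_if_rank_le[OF sym] rank_xs by metis
  have "c \<bullet> xs \<le> c \<bullet> y" if "y \<in> ball xs d \<inter> real_rank_locus A0 A p" for y
  proof -
    have "y \<in> spectrahedron A0 A \<inter> real_rank_locus A0 A r"
      using that d(2) \<open>p \<le> r\<close> by (auto simp: spectrahedron_def real_rank_locus_iff dist_commute)
    then show ?thesis using xs by (simp add: Fmin_def)
  qed
  moreover have "xs \<in> real_rank_locus A0 A p" using rank_xs by (simp add: real_rank_locus_iff)
  ultimately show "local_minimizer c (real_rank_locus A0 A p) xs"
    unfolding local_minimizer_def using d(1) by (intro conjI exI[of _ "ball xs d"]) auto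
qed

end
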